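(* Let $M$ be an entrywise nonnegative $m\times n$ real matrix and let $M=AW$ be a stable nonnegative matrix factorization with $A\in\mathbb{R}_{\ge0}^{m\times r}$, $W\in\mathbb{R}_{\ge0}^{r\times n}$. Let $s=\mathrm{rank}(A)$, let $U\subseteq[m]$ be a set of $s$ linearly independent rows of $A$, and let $B_1,\dots,B_p$ be the ensemble of $A$ at $U$. Then for each column index $i$, among the set of vectors $\mathcal S=\{B_1M_i^U,\dots,B_pM_i^U\}$, $W_i$ is the unique vector with lexicographically minimal support among all entrywise nonnegative vectors in $\mathcal S$.
   Context: Notation: $M_i$ is the $i$-th column, $M^j$ the $j$-th row; for sets of indices, $A_S$ denotes columns in $S$, $A^U$ rows in $U$, and $M_i^U$ the entries of column $M_i$ in rows $U$ (a vector in $\mathbb{R}^s$). $\mathrm{aff}(A)=\{\sum_i\alpha_iA_i:\alpha_i\ge0\}$. A subset $S\subseteq[r]$ of columns of $A$ is admissible for $v\in\mathbb{R}^m$ if $v\in\mathrm{aff}(A_S)$; a subset $T\subseteq[r]$ of rows of $W$ is admissible for a row vector $u$ if $u$ is a nonnegative combination of rows of $W^T$. Lexicographic ordering on subsets of $[r]$: if $|S|<|T|$ then $S$ precedes $T$; equal-size subsets are compared by the standard lexicographic order. Support = set of indices of nonzero entries. $M=AW$ is stable if, with $S_i$ the lexicographically first subset of columns of $A$ admissible for $M_i$ and $T_j$ the lexicographically first subset of rows of $W$ admissible for $M^j$, each $W_i$ is supported in $S_i$ and each row $A^j$ is supported in $T_j$. Ensemble: let $S_1,\dots,S_p\subseteq[r]$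 be the full list (in lexicographic order) of all sets of $s$ columns of $A$ that are linearly independent; the ensemble of $A$ at $U$ is $B_1,\dots,B_p$, where $B_k$ is the $r\times s$ matrix that is zero on all rows outside $S_k$ and whose restriction to the rows in $S_k$ equals $(A^U_{S_k})^{-1}$ (the inverse of the $s\times s$ submatrix of $A$ with rows $U$ and columns $S_k$). *)

theory Defs
  imports "Jordan_Normal_Form.DL_Rank" "Jordan_Normal_Form.Gauss_Jordan_Elimination"
begin

(* Matrices are Jordan_Normal_Form matrices; indices are 0-based, so [r] = {..<r}. *)

definition nonneg_mat :: "real mat \<Rightarrow> bool" where
  "nonneg_mat X \<longleftrightarrow> (\<forall>i<dim_row X. \<forall>j<dim_col X. X $$ (i,j) \<ge> 0)"

definition nonneg_vec :: "real vec \<Rightarrow> bool" where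
  "nonneg_vec v \<longleftrightarrow> (\<forall>i<dim_vec v. v $ i \<ge> 0)"

definition supp_vec :: "real vec \<Rightarrow> nat set" where
  "supp_vec v = {i. i < dim_vec v \<and> v $ i \<noteq> 0}"

definition set_lex_less :: "nat set \<Rightarrow> nat set \<Rightarrow> bool" where
  "set_lex_less S T \<longleftrightarrow> card S < card T \<or>
     (card S = card T \<and>
      (sorted_list_of_set S, sorted_list_of_set T) \<in> lexord {(a,b). a < b})"

definition lex_first :: "nat \<Rightarrow> (nat set \<Rightarrow> bool) \<Rightarrow> nat set" where
  "lex_first r P = (THE S. S \<subseteq> {..<r} \<and> P S \<and>
       (\<forall>T. T \<subseteq> {..<r} \<and> P T \<longrightarrow> T = S \<or> set_lex_less S T))"

definition col_admissible :: "real mat \<Rightarrow> nat set \<Rightarrow> real vec \<Rightarrow> bool" where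
  "col_admissible A S v \<longleftrightarrow> (\<exists>\<alpha>. (\<forall>j\<in>S. \<alpha> j \<ge> 0) \<and>
      v = vec (dim_row A) (\<lambda>k. \<Sum>j\<in>S. \<alpha> j * A $$ (k,j)))"

definition row_admissible :: "real mat \<Rightarrow> nat set \<Rightarrow> real vec \<Rightarrow> bool" where
  "row_admissible W T u \<longleftrightarrow> (\<exists>\<beta>. (\<forall>j\<in>T. \<beta> j \<ge> 0) \<and>
      u = vec (dim_col W) (\<lambda>k. \<Sum>j\<in>T. \<beta> j * W $$ (j,k)))"

definition stable_factorization :: "real mat \<Rightarrow> real mat \<Rightarrow> real mat \<Rightarrow> bool" where
  "stable_factorization M A W \<longleftrightarrow>
     M = A * W \<and>
     (\<forall>i<dim_col M. \<forall>l<dim_row W.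
        W $$ (l,i) \<noteq> 0 \<longrightarrow> l \<in> lex_first (dim_col A) (\<lambda>S. col_admissible A S (col M i))) \<and>
     (\<forall>j<dim_row M. \<forall>l<dim_col A.
        A $$ (j,l) \<noteq> 0 \<longrightarrow> l \<in> lex_first (dim_row W) (\<lambda>T. row_admissible W T (row M j)))"

definition cols_lin_indep :: "real mat \<Rightarrow> nat set \<Rightarrow> bool" where
  "cols_lin_indep A S \<longleftrightarrow> (\<forall>c. (\<forall>k<dim_row A. (\<Sum>j\<in>S. c j * A $$ (k,j)) = 0) \<longrightarrow> (\<forall>j\<in>S. c j = 0))"

definition rows_lin_indep :: "real mat \<Rightarrow> nat set \<Rightarrow> bool" where
  "rows_lin_indep A U \<longleftrightarrow> (\<forall>c. (\<forall>k<dim_col A. (\<Sum>j\<in>U. c j * A $$ (j,k)) = 0) \<longrightarrow> (\<forall>j\<in>U. c j = 0))"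

definition mat_rank :: "real mat \<Rightarrow> nat" where
  "mat_rank A = vec_space.rank (dim_row A) A"

definition sub_mat :: "real mat \<Rightarrow> nat set \<Rightarrow> nat set \<Rightarrow> real mat" where
  "sub_mat A U S = mat (card U) (card S)
     (\<lambda>(a,b). A $$ (sorted_list_of_set U ! a, sorted_list_of_set S ! b))"

(* the ensemble member B for the column set S: r x s matrix, zero outside the rows S,
   whose restriction to the rows S equals (A^U_S)^{-1} *)
definition ensemble_mat :: "real mat \<Rightarrow> nat set \<Rightarrow> nat set \<Rightarrow> real mat" where
  "ensemble_mat A U S = mat (dim_col A) (card U)
     (\<lambda>(j,b). if j \<in> S then the (mat_inverse (sub_mat A U S)) $$ (card {k\<in>S. k < j}, b)
              else 0)"

definition ensemble_sets :: "real mat \<Rightarrow> nat set set" where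
  "ensemble_sets A = {S. S \<subseteq> {..<dim_col A} \<and> card S = mat_rank A \<and> cols_lin_indep A S}"

definition col_restr :: "real mat \<Rightarrow> nat set \<Rightarrow> nat \<Rightarrow> real vec" where
  "col_restr M U i = vec (card U) (\<lambda>a. M $$ (sorted_list_of_set U ! a, i))"

end

theory Submission
  imports Defs
begin

(* Stability confines the support of W_i to the lexicographically first admissible set L for M_i;
   as supp W_i is itself admissible, it equals L. A Caratheodory reduction shows that a
   lexicographically first admissible set has linearly independent columns, so L extends to a set S
   of s independent columns. Since the rows U span the row space of A, the block A^U_S is invertible
   and B_S M_i^U is the unique vector supported in S that A maps to M_i; hence it is W_i. Any
   nonnegative member of the ensemble has an admissible support, which is thus lexicographically
   at least L, and equal supports force equal vectors by the same uniqueness. *)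

section \<open>The lexicographic order on index sets\<close>

lemma set_lex_less_irrefl: "\<not> set_lex_less S S"
  unfolding set_lex_less_def using lexord_irreflexive[of "{(a,b). (a::nat) < b}"] by auto

lemma set_lex_less_trans: "set_lex_less S T \<Longrightarrow> set_lex_less T R \<Longrightarrow> set_lex_less S R"
  unfolding set_lex_less_def
  using lexord_trans[of _ _ "{(a,b). (a::nat) < b}"] by (auto simp: trans_def)

lemma set_lex_less_total:
  assumes "finite S" and "finite T" and "S \<noteq> T"
  shows "set_lex_less S T \<or> set_lex_less T S"
proof -
  have "sorted_list_of_set S \<noteq> sorted_list_of_set T"
    using assms by (metis set_sorted_list_of_set)
  moreover have "\<forall>a b. (a, b) \<in> {(a,b). (a::nat) < b} \<or> a = b \<or> (b, a) \<in> {(a,b). a < b}"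
    by auto
  ultimately have "(sorted_list_of_set S, sorted_list_of_set T) \<in> lexord {(a,b). a < b} \<or>
      (sorted_list_of_set T, sorted_list_of_set S) \<in> lexord {(a,b). a < b}"
    using lexord_linear by blast
  then show ?thesis
    unfolding set_lex_less_def by auto
qed

lemma ex_set_lex_least:
  assumes "finite F" and "F \<noteq> {}" and "\<forall>X\<in>F. finite X"
  shows "\<exists>L\<in>F. \<forall>T\<in>F. T = L \<or> set_lex_less L T"
  using assms
proof (induction F rule: finite_ne_induct)
  case (singleton X)
  then show ?case by simp
next
  case (insert X F)
  from insert.IH insert.prems obtain L
    where L: "L \<in> F" and L_least: "\<And>T. T \<in> F \<Longrightarrow> T = L \<or> set_lex_less L T"
    by auto
  show ?case
  proof (cases "X = L \<or> set_lex_less L X")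
    case True
    then have "T = L \<or> set_lex_less L T" if "T \<in> insert X F" for T
      using that L_least by auto
    then show ?thesis
      using L by (intro bexI[of _ L]) auto
  next
    case False
    moreover have "finite X" and "finite L"
      using insert.prems L by auto
    ultimately have X_less: "set_lex_less X L"
      using set_lex_less_total[of X L] by auto
    have "T = X \<or> set_lex_less X T" if "T \<in> insert X F" for T
    proof (cases "T = X")
      case False
      then have "T = L \<or> set_lex_less L T"
        using that L_least by auto
      then show ?thesis
        using X_less set_lex_less_trans[of X L T] by auto
    qed simp
    then show ?thesis
      by (intro bexI[of _ X]) auto
  qed
qed

lemma lex_first:
  assumes "T0 \<subseteq> {..<r}" and "P T0"
  shows "lex_first r P \<subseteq> {..<r}" and "P (lex_first r P)"
    and "\<And>T. T \<subseteq> {..<r} \<Longrightarrow> P T \<Longrightarrow> T = lex_first r P \<or> set_lex_less (lex_first r P) T"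
proof -
  let ?F = "{T. T \<subseteq> {..<r} \<and> P T}"
  have "finite ?F"
    by (rule finite_subset[of _ "Pow {..<r}"]) auto
  moreover have "\<forall>X\<in>?F. finite X"
    by (auto intro: finite_subset)
  ultimately obtain L where L: "L \<in> ?F" "\<forall>T\<in>?F. T = L \<or> set_lex_less L T"
    using ex_set_lex_least[of ?F] assms by blast
  have "lex_first r P = L"
    unfolding lex_first_def
  proof (rule the_equality)
    show "L \<subseteq> {..<r} \<and> P L \<and> (\<forall>T. T \<subseteq> {..<r} \<and> P T \<longrightarrow> T = L \<or> set_lex_less L T)"
      using L by blast
  next
    fix S
    assume "S \<subseteq> {..<r} \<and> P S \<and> (\<forall>T. T \<subseteq> {..<r} \<and> P T \<longrightarrow> T = S \<or> set_lex_less S T)"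
    then have "S \<in> ?F" and "L = S \<or> set_lex_less S L"
      using L(1) by auto
    moreover from this(1) have "S = L \<or> set_lex_less L S"
      using L(2) by blast
    ultimately show "S = L"
      using set_lex_less_trans[of S L S] set_lex_less_irrefl[of S] by blast
  qed
  then show "lex_first r P \<subseteq> {..<r}" and "P (lex_first r P)"
    and "\<And>T. T \<subseteq> {..<r} \<Longrightarrow> P T \<Longrightarrow> T = lex_first r P \<or> set_lex_less (lex_first r P) T"
    using L by auto
qed

lemma card_lex_first_le:
  assumes "T \<subseteq> {..<r}" and "P T"
  shows "card (lex_first r P) \<le> card T"
proof -
  have "T = lex_first r P \<or> set_lex_less (lex_first r P) T"
    using lex_first(3)[of T r P T] assms by blast
  then show ?thesis
    unfolding set_lex_less_def by (elim disjE conjE) simp_all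
qed

lemma bij_betw_nth_sorted_list_of_set:
  "finite S \<Longrightarrow> bij_betw ((!) (sorted_list_of_set S)) {..<card S} S"
  by (rule bij_betw_nth) simp_all

lemma card_less_nth_sorted_list_of_set:
  assumes "finite S" and "b < card S"
  shows "card {k\<in>S. k < sorted_list_of_set S ! b} = b"
proof -
  let ?xs = "sorted_list_of_set S"
  have bij: "bij_betw ((!) ?xs) {..<card S} S"
    using assms(1) by (rule bij_betw_nth_sorted_list_of_set)
  have less_iff: "?xs ! q < ?xs ! b \<longleftrightarrow> q < b" if "q < card S" for q
  proof
    assume "?xs ! q < ?xs ! b"
    moreover have "\<not> q < b \<Longrightarrow> ?xs ! b \<le> ?xs ! q"
      using that by (intro sorted_nth_mono) auto
    ultimately show "q < b" by force
  next
    assume "q < b"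
    then show "?xs ! q < ?xs ! b"
      using assms by (intro sorted_wrt_nth_less[of "(<)"]) auto
  qed
  have "{k\<in>S. k < ?xs ! b} = (!) ?xs ` {q\<in>{..<card S}. ?xs ! q < ?xs ! b}"
    using bij_betw_imp_surj_on[OF bij] by auto
  also have "\<dots> = (!) ?xs ` {..<b}"
    using less_iff assms(2) by (intro arg_cong[where f="image _"]) auto
  finally have "{k\<in>S. k < ?xs ! b} = (!) ?xs ` {..<b}" .
  moreover have "inj_on ((!) ?xs) {..<b}"
    using assms(2) by (intro inj_on_subset[OF bij_betw_imp_inj_on[OF bij]]) auto
  ultimately show ?thesis
    by (simp add: card_image)
qed

lemma nth_sorted_list_of_set_card_less:
  assumes "finite S" and "j \<in> S"
  shows "card {k\<in>S. k < j} < card S" and "sorted_list_of_set S ! card {k\<in>S. k < j} = j"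
proof -
  obtain b where b: "b < card S" "j = sorted_list_of_set S ! b"
    using assms by (metis in_set_conv_nth length_sorted_list_of_set set_sorted_list_of_set)
  moreover from this have "card {k\<in>S. k < j} = b"
    using card_less_nth_sorted_list_of_set[OF assms(1) b(1)] by simp
  ultimately show "card {k\<in>S. k < j} < card S" and "sorted_list_of_set S ! card {k\<in>S. k < j} = j"
    by simp_all
qed

text \<open>Places the entries of \<open>y\<close> at the elements of \<open>S\<close>, in increasing order; the ensemble
  member \<open>B_S\<close> acts as this lift composed with \<open>(A^U_S)^{-1}\<close>.\<close>

definition lift_vec :: "nat \<Rightarrow> nat set \<Rightarrow> 'a::zero vec \<Rightarrow> 'a vec" where
  "lift_vec r S y = vec r (\<lambda>j. if j \<in> S then y $ card {k\<in>S. k < j} else 0)"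

lemma supp_vec_lift_vec: "supp_vec (lift_vec r S y) \<subseteq> S"
  unfolding supp_vec_def lift_vec_def by (auto split: if_splits)

lemma lift_vec_nth_sorted_list_of_set:
  assumes "S \<subseteq> {..<r}" and "b < card S"
  shows "lift_vec r S y $ (sorted_list_of_set S ! b) = y $ b"
proof -
  have "finite S"
    using assms(1) by (rule finite_subset) simp
  moreover from this have "sorted_list_of_set S ! b \<in> S"
    using assms(2) nth_mem[of b "sorted_list_of_set S"] by simp
  moreover from this have "sorted_list_of_set S ! b < r"
    using assms(1) by auto
  ultimately show ?thesis
    using card_less_nth_sorted_list_of_set[OF \<open>finite S\<close> assms(2)] by (simp add: lift_vec_def)
qed

lemma lift_vec_eq_0D:
  fixes y :: "real vec"
  assumes "S \<subseteq> {..<r}" and "y \<in> carrier_vec (card S)" and "lift_vec r S y = 0\<^sub>v r"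
  shows "y = 0\<^sub>v (card S)"
proof (rule eq_vecI)
  fix b
  assume "b < dim_vec (0\<^sub>v (card S))"
  then have "b < card S"
    by simp
  moreover have "finite S"
    using assms(1) by (rule finite_subset) simp
  ultimately have "sorted_list_of_set S ! b \<in> S"
    using nth_mem[of b "sorted_list_of_set S"] by simp
  then have "lift_vec r S y $ (sorted_list_of_set S ! b) = 0"
    using assms(1,3) by auto
  moreover have "lift_vec r S y $ (sorted_list_of_set S ! b) = y $ b"
    using lift_vec_nth_sorted_list_of_set[OF assms(1) \<open>b < card S\<close>] .
  ultimately show "y $ b = 0\<^sub>v (card S) $ b"
    using \<open>b < card S\<close> by simp
qed (use assms(2) in simp)

section \<open>Linear independence of indexed families\<close>

definition family_lin_indep :: "nat \<Rightarrow> ('i \<Rightarrow> 'a::field vec) \<Rightarrow> 'i set \<Rightarrow> bool" where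
  "family_lin_indep n v I \<longleftrightarrow>
     (\<forall>c. (\<forall>k<n. (\<Sum>j\<in>I. c j * v j $ k) = 0) \<longrightarrow> (\<forall>j\<in>I. c j = 0))"

lemma family_lin_indepD:
  assumes "family_lin_indep n v I" and "\<And>k. k < n \<Longrightarrow> (\<Sum>j\<in>I. c j * v j $ k) = 0" and "j \<in> I"
  shows "c j = 0"
  using assms(1) unfolding family_lin_indep_def
  by (elim allE[of _ c] impE) (use assms(2,3) in auto)

lemma cols_lin_indep_iff_family_lin_indep:
  "cols_lin_indep A S \<longleftrightarrow> family_lin_indep (dim_row A) (col A) S"
  unfolding cols_lin_indep_def family_lin_indep_def by (simp add: col_def)

lemma set_cols_carrier_mat: "A \<in> carrier_mat n nc \<Longrightarrow> set (cols A) = col A ` {..<nc}"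
  unfolding cols_def by (simp add: atLeast0LessThan)

context vec_space
begin

lemma family_lin_indep_imp_inj_on:
  fixes v :: "'i \<Rightarrow> 'a vec"
  assumes "finite I" and "family_lin_indep n v I"
  shows "inj_on v I"
proof (rule inj_onI, rule ccontr)
  fix j1 j2
  assume j: "j1 \<in> I" "j2 \<in> I" "v j1 = v j2" "j1 \<noteq> j2"
  define c :: "'i \<Rightarrow> 'a" where "c j = (if j = j1 then 1 else if j = j2 then -1 else 0)" for j
  have "(\<Sum>j\<in>I. c j * v j $ k) = 0" for k
  proof -
    have "(\<Sum>j\<in>I. c j * v j $ k) = (\<Sum>j\<in>I. (if j = j1 then v j1 $ k else 0) - (if j = j2 then v j2 $ k else 0))"
      using j(4) by (intro sum.cong refl) (simp add: c_def)
    also have "\<dots> = v j1 $ k - v j2 $ k"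
      using assms(1) j(1,2) by (simp only: sum_subtractf sum.delta if_True)
    finally show ?thesis
      using j(3) by simp
  qed
  then have "c j1 = 0"
    by (rule family_lin_indepD[OF assms(2) _ j(1)])
  then show False
    by (simp add: c_def)
qed
lemma family_lin_indep_imp_lin_indpt:
  fixes v :: "'i \<Rightarrow> 'a vec"
  assumes "finite I" and "v ` I \<subseteq> carrier_vec n" and "family_lin_indep n v I"
  shows "lin_indpt (v ` I)"
proof (rule finite_lin_indpt2)
  show "finite (v ` I)" and "v ` I \<subseteq> carrier_vec n"
    using assms by auto
  have inj: "inj_on v I"
    using assms(1,3) by (rule family_lin_indep_imp_inj_on)
  fix a
  assume a: "lincomb a (v ` I) = 0\<^sub>v n"
  have "(\<Sum>j\<in>I. a (v j) * v j $ k) = 0" if "k < n" for k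
  proof -
    have "(\<Sum>j\<in>I. a (v j) * v j $ k) = lincomb a (v ` I) $ k"
      using lincomb_index[OF that assms(2)] by (simp add: sum.reindex[OF inj])
    then show ?thesis
      using a that by simp
  qed
  then show "\<forall>x\<in>v ` I. a x = 0"
    using family_lin_indepD[OF assms(3), of "a \<circ> v"] by auto
qed

lemma lin_indpt_imp_family_lin_indep:
  fixes v :: "'i \<Rightarrow> 'a vec"
  assumes "finite I" and "v ` I \<subseteq> carrier_vec n" and "inj_on v I" and "lin_indpt (v ` I)"
  shows "family_lin_indep n v I"
  unfolding family_lin_indep_def
proof (intro allI impI ballI)
  fix c j
  assume c: "\<forall>k<n. (\<Sum>j\<in>I. c j * v j $ k) = 0" and "j \<in> I"
  define a where "a = c \<circ> inv_into I v"
  have "lincomb a (v ` I) = 0\<^sub>v n"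
  proof (rule eq_vecI)
    fix k
    assume "k < dim_vec (0\<^sub>v n)"
    then have "lincomb a (v ` I) $ k = (\<Sum>j\<in>I. c j * v j $ k)"
      using lincomb_index[of k "v ` I" a] assms(2,3) by (simp add: sum.reindex a_def)
    then show "lincomb a (v ` I) $ k = 0\<^sub>v n $ k"
      using c \<open>k < dim_vec (0\<^sub>v n)\<close> by simp
  next
    have "lincomb a (v ` I) \<in> carrier_vec n"
      using lincomb_closed assms(1,2) by simp
    then show "dim_vec (lincomb a (v ` I)) = dim_vec (0\<^sub>v n)"
      by simp
  qed
  from not_lindepD[OF assms(4) _ _ _ this] assms(1)
  have "a \<in> v ` I \<rightarrow> {0}"
    by auto
  then have "a (v j) = 0"
    using \<open>j \<in> I\<close> by auto
  then show "c j = 0"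
    using \<open>j \<in> I\<close> assms(3) by (simp add: a_def)
qed

lemma card_le_if_family_lin_indep:
  fixes v :: "'i \<Rightarrow> 'a vec"
  assumes "finite I" and "v ` I \<subseteq> carrier_vec n" and "family_lin_indep n v I"
  shows "card I \<le> n"
proof -
  have "card (v ` I) \<le> n"
    using li_le_dim(2)[OF fin_dim assms(2) family_lin_indep_imp_lin_indpt[OF assms]] dim_is_n
    by simp
  then show ?thesis
    using card_image[OF family_lin_indep_imp_inj_on[OF assms(1,3)]] by simp
qed

lemma family_lin_indep_cols_extend:
  assumes A: "A \<in> carrier_mat n nc" and I: "I \<subseteq> {..<nc}" and indep: "family_lin_indep n (col A) I"
  shows "\<exists>J. I \<subseteq> J \<and> J \<subseteq> {..<nc} \<and> card J = rank A \<and> family_lin_indep n (col A) J"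
proof -
  have "finite I"
    using I by (rule finite_subset) simp
  have cols: "set (cols A) = col A ` {..<nc}"
    using A by (rule set_cols_carrier_mat)
  have inj: "inj_on (col A) I"
    using \<open>finite I\<close> indep by (rule family_lin_indep_imp_inj_on)
  have "col A ` I \<subseteq> carrier_vec n"
    using A I by auto
  then have "col A ` I \<subseteq> set (cols A) \<and> lin_indpt (col A ` I)"
    using family_lin_indep_imp_lin_indpt[OF \<open>finite I\<close> _ indep] cols I by auto
  from maximal_exists_superset[of "set (cols A)" "\<lambda>T. T \<subseteq> set (cols A) \<and> lin_indpt T", OF _ _ this]
  obtain T where T: "maximal T (\<lambda>T. T \<subseteq> set (cols A) \<and> lin_indpt T)" "col A ` I \<subseteq> T"
    by auto
  then have T_cols: "T \<subseteq> col A ` {..<nc}" and "lin_indpt T"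
    using cols unfolding maximal_def by auto
  define J where "J = I \<union> inv_into {..<nc} (col A) ` (T - col A ` I)"
  have J_new: "col A ` inv_into {..<nc} (col A) ` (T - col A ` I) = T - col A ` I"
    using T_cols by (intro image_inv_into_cancel) auto
  have "inj_on (col A \<circ> inv_into {..<nc} (col A)) (T - col A ` I)"
    using T_cols by (intro inj_onI) (auto simp: f_inv_into_f subset_iff)
  then have "inj_on (col A) (inv_into {..<nc} (col A) ` (T - col A ` I))"
    by (rule inj_on_imageI)
  then have inj_J: "inj_on (col A) J"
    unfolding J_def using inj J_new by (auto simp: inj_on_Un)
  have J_img: "col A ` J = T"
    unfolding J_def image_Un J_new using T(2) by auto
  have "inv_into {..<nc} (col A) x \<in> {..<nc}" if "x \<in> T" for x
    using that T_cols by (intro inv_into_into) auto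
  then have J_sub: "J \<subseteq> {..<nc}"
    unfolding J_def using I by auto
  then have "finite J"
    by (rule finite_subset) simp
  moreover have "col A ` J \<subseteq> carrier_vec n"
    using J_sub A by auto
  ultimately have "family_lin_indep n (col A) J"
    using lin_indpt_imp_family_lin_indep[OF _ _ inj_J] J_img \<open>lin_indpt T\<close> by simp
  moreover have "card J = rank A"
    using rank_card_indpt[OF A T(1)] card_image[OF inj_J] J_img by simp
  moreover have "I \<subseteq> J"
    unfolding J_def by blast
  ultimately show ?thesis
    using J_sub by (intro exI[of _ J]) simp
qed

lemma col_in_span_of_family_lin_indep_cols:
  assumes A: "A \<in> carrier_mat n nc" and I: "I \<subseteq> {..<nc}"
    and indep: "family_lin_indep n (col A) I" and card: "card I = rank A" and l: "l < nc"
  shows "\<exists>c. \<forall>k<n. A $$ (k,l) = (\<Sum>t\<in>I. c t * A $$ (k,t))"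
proof -
  have "finite I"
    using I by (rule finite_subset) simp
  have carr: "col A ` I \<subseteq> carrier_vec n"
    using A I by auto
  have inj: "inj_on (col A) I"
    using \<open>finite I\<close> indep by (rule family_lin_indep_imp_inj_on)
  have li: "lin_indpt (col A ` I)"
    using family_lin_indep_imp_lin_indpt[OF \<open>finite I\<close> carr indep] .
  have "col A l \<in> span (col A ` I)"
  proof (rule ccontr)
    assume not_span: "col A l \<notin> span (col A ` I)"
    then have "col A l \<notin> col A ` I"
      using in_own_span[OF carr] by blast
    moreover have "lin_indpt (insert (col A l) (col A ` I))"
      using lin_dep_iff_in_span[OF carr li _ calculation] not_span A l by auto
    moreover have "insert (col A l) (col A ` I) \<subseteq> set (cols A)"
      using I l set_cols_carrier_mat[OF A] by auto
    ultimately have "card (insert (col A l) (col A ` I)) \<le> rank A"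
      using rank_ge_card_indpt[OF A] by blast
    then have "Suc (card (col A ` I)) \<le> rank A"
      using \<open>col A l \<notin> col A ` I\<close> \<open>finite I\<close> by simp
    then show False
      using card card_image[OF inj] by simp
  qed
  then obtain a where a: "lincomb a (col A ` I) = col A l"
    using finite_in_span[OF finite_imageI[OF \<open>finite I\<close>] carr] by blast
  have "A $$ (k,l) = (\<Sum>t\<in>I. a (col A t) * A $$ (k,t))" if "k < n" for k
  proof -
    have "A $$ (k,l) = lincomb a (col A ` I) $ k"
      using a A that l by simp
    also have "\<dots> = (\<Sum>t\<in>I. a (col A t) * col A t $ k)"
      using lincomb_index[OF that carr] by (simp add: sum.reindex[OF inj])
    also have "\<dots> = (\<Sum>t\<in>I. a (col A t) * A $$ (k,t))"
      using A that I by (intro sum.cong refl) auto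
    finally show ?thesis .
  qed
  then show ?thesis
    by (intro exI[of _ "\<lambda>t. a (col A t)"]) blast
qed

end

lemma cols_lin_indep_extend_ensemble_set:
  fixes A :: "real mat"
  assumes "A \<in> carrier_mat m r" and "L \<subseteq> {..<r}" and "cols_lin_indep A L"
  shows "\<exists>S\<in>ensemble_sets A. L \<subseteq> S"
proof -
  have "family_lin_indep m (col A) L"
    using assms by (simp add: cols_lin_indep_iff_family_lin_indep)
  then obtain S where "L \<subseteq> S" "S \<subseteq> {..<r}" "card S = vec_space.rank m A" "family_lin_indep m (col A) S"
    using vec_space.family_lin_indep_cols_extend[OF assms(1,2)] by blast
  moreover have "S \<in> ensemble_sets A"
    using calculation assms(1)
    by (simp add: ensemble_sets_def mat_rank_def cols_lin_indep_iff_family_lin_indep)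
  ultimately show ?thesis
    by blast
qed

lemma col_combination_of_ensemble_set:
  fixes A :: "real mat"
  assumes "A \<in> carrier_mat m r" and "S \<in> ensemble_sets A" and "l < r"
  shows "\<exists>c. \<forall>k<m. A $$ (k,l) = (\<Sum>t\<in>S. c t * A $$ (k,t))"
proof (rule vec_space.col_in_span_of_family_lin_indep_cols[OF assms(1) _ _ _ assms(3)])
  show "S \<subseteq> {..<r}" and "family_lin_indep m (col A) S" and "card S = vec_space.rank m A"
    using assms(1,2) by (auto simp: ensemble_sets_def mat_rank_def cols_lin_indep_iff_family_lin_indep)
qed

lemma cols_lin_indepD:
  assumes "cols_lin_indep A S" and "\<And>k. k < dim_row A \<Longrightarrow> (\<Sum>j\<in>S. c j * A $$ (k,j)) = 0"
    and "j \<in> S"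
  shows "c j = 0"
  using assms(1) unfolding cols_lin_indep_def
  by (elim allE[of _ c] impE) (use assms(2,3) in auto)

lemma rows_lin_indepD:
  assumes "rows_lin_indep A U" and "\<And>l. l < dim_col A \<Longrightarrow> (\<Sum>u\<in>U. c u * A $$ (u,l)) = 0"
    and "u \<in> U"
  shows "c u = 0"
  using assms(1) unfolding rows_lin_indep_def
  by (elim allE[of _ c] impE) (use assms(2,3) in auto)

lemma supp_vec_subset: "supp_vec x \<subseteq> {..<dim_vec x}"
  unfolding supp_vec_def by auto

lemma nth_eq_0_if_notin_supp_vec: "j < dim_vec x \<Longrightarrow> j \<notin> supp_vec x \<Longrightarrow> x $ j = 0"
  unfolding supp_vec_def by auto

lemma mult_mat_vec_nth_supported:
  assumes "A \<in> carrier_mat m r" and "x \<in> carrier_vec r" and "supp_vec x \<subseteq> S" and "S \<subseteq> {..<r}"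
    and "k < m"
  shows "(A *\<^sub>v x) $ k = (\<Sum>j\<in>S. x $ j * A $$ (k,j))"
proof -
  have "(A *\<^sub>v x) $ k = (\<Sum>j\<in>{..<r}. x $ j * A $$ (k,j))"
    using assms(1,2,5) by (simp add: scalar_prod_def lessThan_atLeast0 mult.commute)
  also have "\<dots> = (\<Sum>j\<in>S. x $ j * A $$ (k,j))"
    using assms(2-4) nth_eq_0_if_notin_supp_vec[of _ x]
    by (intro sum.mono_neutral_right) auto
  finally show ?thesis .
qed

lemma eq_if_supported_in_cols_lin_indep:
  fixes A :: "real mat"
  assumes A: "A \<in> carrier_mat m r" and indep: "cols_lin_indep A S" and S: "S \<subseteq> {..<r}"
    and x: "x \<in> carrier_vec r" "supp_vec x \<subseteq> S" and z: "z \<in> carrier_vec r" "supp_vec z \<subseteq> S"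
    and eq: "A *\<^sub>v x = A *\<^sub>v z"
  shows "x = z"
proof -
  have "(\<Sum>j\<in>S. (x $ j - z $ j) * A $$ (k,j)) = 0" if "k < dim_row A" for k
  proof -
    have "k < m"
      using that A by simp
    then have "(\<Sum>j\<in>S. (x $ j - z $ j) * A $$ (k,j)) = (A *\<^sub>v x) $ k - (A *\<^sub>v z) $ k"
      using mult_mat_vec_nth_supported[OF A x(1) x(2) S] mult_mat_vec_nth_supported[OF A z(1) z(2) S]
      by (simp add: left_diff_distrib sum_subtractf)
    then show ?thesis
      using eq by simp
  qed
  then have "x $ j - z $ j = 0" if "j \<in> S" for j
    using cols_lin_indepD[OF indep _ that, of "\<lambda>j. x $ j - z $ j"] by blast
  then have "x $ j = z $ j" if "j \<in> S" for j
    using that by simp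
  moreover have "x $ j = z $ j" if "j < r" "j \<notin> S" for j
  proof -
    have "j \<notin> supp_vec x" and "j \<notin> supp_vec z"
      using that x(2) z(2) by auto
    then show ?thesis
      using that x(1) z(1) nth_eq_0_if_notin_supp_vec[of j x] nth_eq_0_if_notin_supp_vec[of j z]
      by simp
  qed
  ultimately show ?thesis
    using x(1) z(1) by (intro eq_vecI) auto
qed

section \<open>Admissible sets\<close>

lemma col_admissible_supp_vec:
  fixes A :: "real mat"
  assumes A: "A \<in> carrier_mat m r" and x: "x \<in> carrier_vec r" and nonneg: "nonneg_vec x"
  shows "col_admissible A (supp_vec x) (A *\<^sub>v x)"
  unfolding col_admissible_def
proof (intro exI conjI)
  show "\<forall>j\<in>supp_vec x. x $ j \<ge> 0"
    using nonneg x unfolding nonneg_vec_def supp_vec_def by auto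
  have "supp_vec x \<subseteq> {..<r}"
    using supp_vec_subset[of x] x by simp
  then show "A *\<^sub>v x = vec (dim_row A) (\<lambda>k. \<Sum>j\<in>supp_vec x. x $ j * A $$ (k,j))"
    using mult_mat_vec_nth_supported[OF A x subset_refl] A by (intro eq_vecI) auto
qed

lemma not_cols_lin_indepE:
  assumes "\<not> cols_lin_indep A L"
  obtains c j0 where "\<And>k. k < dim_row A \<Longrightarrow> (\<Sum>j\<in>L. c j * A $$ (k,j)) = 0"
    and "j0 \<in> L" and "c j0 > 0"
proof -
  obtain c j0 where c: "\<forall>k<dim_row A. (\<Sum>j\<in>L. c j * A $$ (k,j)) = 0" and "j0 \<in> L" "c j0 \<noteq> 0"
    using assms unfolding cols_lin_indep_def by blast
  show thesis
  proof (cases "c j0 > 0")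
    case True
    then show thesis
      using that[of c j0] c \<open>j0 \<in> L\<close> by blast
  next
    case False
    have "(\<Sum>j\<in>L. - c j * A $$ (k,j)) = 0" if "k < dim_row A" for k
      using c that by (simp add: sum_negf)
    then show thesis
      using that[of "\<lambda>j. - c j" j0] False \<open>c j0 \<noteq> 0\<close> \<open>j0 \<in> L\<close> by simp
  qed
qed

text \<open>The step is the least ratio of \<open>\<alpha> j / c j\<close> over the \<open>j\<close> with \<open>c j > 0\<close>.\<close>

lemma ex_nonneg_shift_to_boundary:
  fixes \<alpha> c :: "'a \<Rightarrow> real"
  assumes "finite L" and \<alpha>: "\<forall>j\<in>L. \<alpha> j \<ge> 0" and "j0 \<in> L" and "c j0 > 0"
  shows "\<exists>t. \<exists>j1\<in>L. \<alpha> j1 - t * c j1 = 0 \<and> (\<forall>j\<in>L. \<alpha> j - t * c j \<ge> 0)"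
proof -
  define D where "D = {j\<in>L. c j > 0}"
  have "finite D" and "j0 \<in> D"
    using assms by (auto simp: D_def)
  define j1 where "j1 = arg_min_on (\<lambda>j. \<alpha> j / c j) D"
  have "j1 \<in> D" and j1_min: "\<And>j. j \<in> D \<Longrightarrow> \<alpha> j1 / c j1 \<le> \<alpha> j / c j"
    using arg_min_if_finite[OF \<open>finite D\<close>, of "\<lambda>j. \<alpha> j / c j"] \<open>j0 \<in> D\<close>
    unfolding j1_def by (auto simp: not_less)
  define t where "t = \<alpha> j1 / c j1"
  have "j1 \<in> L" and "c j1 > 0"
    using \<open>j1 \<in> D\<close> by (auto simp: D_def)
  then have "t \<ge> 0"
    using \<alpha> by (simp add: t_def)
  have "\<alpha> j - t * c j \<ge> 0" if "j \<in> L" for j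
  proof (cases "c j > 0")
    case True
    then have "t \<le> \<alpha> j / c j"
      using j1_min that by (simp add: D_def t_def)
    then show ?thesis
      using True by (simp add: pos_le_divide_eq)
  next
    case False
    then have "t * c j \<le> 0"
      using \<open>t \<ge> 0\<close> by (simp add: mult_nonneg_nonpos not_less)
    moreover have "\<alpha> j \<ge> 0"
      using \<alpha> that by blast
    ultimately show ?thesis
      by simp
  qed
  moreover have "\<alpha> j1 - t * c j1 = 0"
    using \<open>c j1 > 0\<close> by (simp add: t_def)
  ultimately show ?thesis
    using \<open>j1 \<in> L\<close> by blast
qed

text \<open>Caratheodory's reduction: move the coefficients along a linear dependence until one vanishes.\<close>

lemma col_admissible_Diff_if_not_cols_lin_indep:
  fixes A :: "real mat"
  assumes adm: "col_admissible A L v" and "finite L" and dep: "\<not> cols_lin_indep A L"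
  shows "\<exists>j\<in>L. col_admissible A (L - {j}) v"
proof -
  obtain \<alpha> where \<alpha>: "\<forall>j\<in>L. \<alpha> j \<ge> 0" and v: "v = vec (dim_row A) (\<lambda>k. \<Sum>j\<in>L. \<alpha> j * A $$ (k,j))"
    using adm unfolding col_admissible_def by blast
  obtain c j0 where c: "\<And>k. k < dim_row A \<Longrightarrow> (\<Sum>j\<in>L. c j * A $$ (k,j)) = 0"
    and "j0 \<in> L" "c j0 > 0"
    using not_cols_lin_indepE[OF dep] by blast
  obtain t j1 where "j1 \<in> L" and "\<alpha> j1 - t * c j1 = 0" and nonneg: "\<And>j. j \<in> L \<Longrightarrow> \<alpha> j - t * c j \<ge> 0"
    using ex_nonneg_shift_to_boundary[OF \<open>finite L\<close> \<alpha> \<open>j0 \<in> L\<close>, of c] \<open>c j0 > 0\<close> by blast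
  define \<beta> where "\<beta> j = \<alpha> j - t * c j" for j
  have "(\<Sum>j\<in>L - {j1}. \<beta> j * A $$ (k,j)) = v $ k" if "k < dim_row A" for k
  proof -
    have "(\<Sum>j\<in>L - {j1}. \<beta> j * A $$ (k,j)) = (\<Sum>j\<in>L. \<beta> j * A $$ (k,j))"
      using sum.remove[OF \<open>finite L\<close> \<open>j1 \<in> L\<close>, of "\<lambda>j. \<beta> j * A $$ (k,j)"] \<open>\<alpha> j1 - t * c j1 = 0\<close>
      by (simp add: \<beta>_def)
    also have "\<dots> = (\<Sum>j\<in>L. \<alpha> j * A $$ (k,j)) - t * (\<Sum>j\<in>L. c j * A $$ (k,j))"
      by (simp add: \<beta>_def left_diff_distrib sum_subtractf sum_distrib_left mult.assoc)
    finally show ?thesis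
      using c[OF that] v that by simp
  qed
  then have "v = vec (dim_row A) (\<lambda>k. \<Sum>j\<in>L - {j1}. \<beta> j * A $$ (k,j))"
    using v by (intro eq_vecI) auto
  then have "col_admissible A (L - {j1}) v"
    unfolding col_admissible_def using nonneg by (intro exI[of _ \<beta>]) (simp add: \<beta>_def)
  then show ?thesis
    using \<open>j1 \<in> L\<close> by blast
qed

lemma cols_lin_indep_lex_first:
  fixes A :: "real mat"
  assumes "T \<subseteq> {..<r}" and "col_admissible A T v"
  shows "cols_lin_indep A (lex_first r (\<lambda>S. col_admissible A S v))" (is "cols_lin_indep A ?L")
proof (rule ccontr)
  assume "\<not> cols_lin_indep A ?L"
  moreover have "?L \<subseteq> {..<r}" and "col_admissible A ?L v"
    using lex_first(1,2)[of T r "\<lambda>S. col_admissible A S v"] assms by auto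
  moreover from this(1) have "finite ?L"
    by (rule finite_subset) simp
  ultimately obtain j where "j \<in> ?L" "col_admissible A (?L - {j}) v"
    using col_admissible_Diff_if_not_cols_lin_indep by blast
  moreover have "?L - {j} \<subseteq> {..<r}"
    using \<open>?L \<subseteq> {..<r}\<close> by blast
  ultimately have "card ?L \<le> card (?L - {j})"
    by (intro card_lex_first_le)
  then show False
    using card_Diff1_less[OF \<open>finite ?L\<close> \<open>j \<in> ?L\<close>] by simp
qed

section \<open>Rows spanning the row space\<close>

definition rows_span :: "real mat \<Rightarrow> nat set \<Rightarrow> bool" where
  "rows_span A U \<longleftrightarrow>
     (\<forall>k<dim_row A. \<exists>d. \<forall>l<dim_col A. A $$ (k,l) = (\<Sum>u\<in>U. d u * A $$ (u,l)))"

lemma rows_lin_indep_insert: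
  assumes indep: "rows_lin_indep A U" and "finite U" and "k \<notin> U"
    and not_comb: "\<nexists>d. \<forall>l<dim_col A. A $$ (k,l) = (\<Sum>u\<in>U. d u * A $$ (u,l))"
  shows "rows_lin_indep A (insert k U)"
  unfolding rows_lin_indep_def
proof (intro allI impI)
  fix e
  assume "\<forall>l<dim_col A. (\<Sum>u\<in>insert k U. e u * A $$ (u,l)) = 0"
  then have e: "e k * A $$ (k,l) + (\<Sum>u\<in>U. e u * A $$ (u,l)) = 0" if "l < dim_col A" for l
    using that \<open>finite U\<close> \<open>k \<notin> U\<close> by simp
  have "e k = 0"
  proof (rule ccontr)
    assume "e k \<noteq> 0"
    then have "A $$ (k,l) = (\<Sum>u\<in>U. (- e u / e k) * A $$ (u,l))" if "l < dim_col A" for l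
      using e[OF that] by (simp add: field_simps sum_divide_distrib[symmetric] sum_negf)
    then have "\<exists>d. \<forall>l<dim_col A. A $$ (k,l) = (\<Sum>u\<in>U. d u * A $$ (u,l))"
      by (intro exI[of _ "\<lambda>u. - e u / e k"]) simp
    with not_comb show False ..
  qed
  moreover have "e u = 0" if "u \<in> U" for u
    using rows_lin_indepD[OF indep _ that, of e] e \<open>e k = 0\<close> by simp
  ultimately show "\<forall>j\<in>insert k U. e j = 0"
    by blast
qed

text \<open>Row rank is at most column rank: restricted to a column basis, independent rows stay independent.\<close>

lemma card_le_mat_rank_if_rows_lin_indep:
  fixes A :: "real mat"
  assumes A: "A \<in> carrier_mat m r" and U: "U \<subseteq> {..<m}" and indep: "rows_lin_indep A U"
  shows "card U \<le> mat_rank A"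
proof -
  obtain S where S: "S \<in> ensemble_sets A"
    using cols_lin_indep_extend_ensemble_set[OF A, of "{}"] by (auto simp: cols_lin_indep_def)
  then have "finite S" and card_S: "card S = mat_rank A"
    by (auto simp: ensemble_sets_def intro: finite_subset)
  have "\<forall>l\<in>{..<r}. \<exists>c. \<forall>k<m. A $$ (k,l) = (\<Sum>t\<in>S. c t * A $$ (k,t))"
    using col_combination_of_ensemble_set[OF A S] by blast
  from bchoice[OF this] obtain C
    where "\<forall>l\<in>{..<r}. \<forall>k<m. A $$ (k,l) = (\<Sum>t\<in>S. C l t * A $$ (k,t))"
    by blast
  then have C: "\<And>l k. l < r \<Longrightarrow> k < m \<Longrightarrow> A $$ (k,l) = (\<Sum>t\<in>S. C l t * A $$ (k,t))"
    by blast
  define w where "w u = vec (card S) (\<lambda>b. A $$ (u, sorted_list_of_set S ! b))" for u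
  have "family_lin_indep (card S) w U"
    unfolding family_lin_indep_def
  proof (intro allI impI ballI)
    fix e j
    assume e: "\<forall>b<card S. (\<Sum>u\<in>U. e u * w u $ b) = 0" and "j \<in> U"
    have on_S: "(\<Sum>u\<in>U. e u * A $$ (u,t)) = 0" if "t \<in> S" for t
      using e nth_sorted_list_of_set_card_less[OF \<open>finite S\<close> that] by (auto simp: w_def)
    have "(\<Sum>u\<in>U. e u * A $$ (u,l)) = 0" if "l < dim_col A" for l
    proof -
      have "(\<Sum>u\<in>U. e u * A $$ (u,l)) = (\<Sum>u\<in>U. e u * (\<Sum>t\<in>S. C l t * A $$ (u,t)))"
        using C that A U by (intro sum.cong refl) auto
      also have "\<dots> = (\<Sum>u\<in>U. \<Sum>t\<in>S. C l t * (e u * A $$ (u,t)))"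
        by (simp add: sum_distrib_left mult.left_commute)
      also have "\<dots> = (\<Sum>t\<in>S. C l t * (\<Sum>u\<in>U. e u * A $$ (u,t)))"
        by (subst sum.swap) (simp add: sum_distrib_left)
      finally show ?thesis
        using on_S by simp
    qed
    then show "e j = 0"
      using rows_lin_indepD[OF indep _ \<open>j \<in> U\<close>] by blast
  qed
  moreover have "finite U"
    using U by (rule finite_subset) simp
  ultimately have "card U \<le> card S"
    by (intro vec_space.card_le_if_family_lin_indep) (auto simp: w_def)
  then show ?thesis
    using card_S by simp
qed

lemma rows_span_if_card_eq_mat_rank:
  fixes A :: "real mat"
  assumes A: "A \<in> carrier_mat m r" and U: "U \<subseteq> {..<m}" and card: "card U = mat_rank A"
    and indep: "rows_lin_indep A U"
  shows "rows_span A U"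
  unfolding rows_span_def
proof (intro allI impI)
  fix k
  assume "k < dim_row A"
  show "\<exists>d. \<forall>l<dim_col A. A $$ (k,l) = (\<Sum>u\<in>U. d u * A $$ (u,l))"
  proof (cases "k \<in> U")
    case True
    have "finite U"
      using U by (rule finite_subset) simp
    then have "A $$ (k,l) = (\<Sum>u\<in>U. (if u = k then 1 else 0) * A $$ (u,l))" for l
      using True by (simp add: if_distrib[of "\<lambda>x. x * _"] cong: if_cong)
    then show ?thesis
      by (intro exI[of _ "\<lambda>u. if u = k then 1 else 0"]) simp
  next
    case False
    show ?thesis
    proof (rule ccontr)
      assume "\<nexists>d. \<forall>l<dim_col A. A $$ (k,l) = (\<Sum>u\<in>U. d u * A $$ (u,l))"
      moreover have "finite U"
        using U by (rule finite_subset) simp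
      ultimately have "rows_lin_indep A (insert k U)"
        using rows_lin_indep_insert[OF indep _ False] by blast
      moreover have "insert k U \<subseteq> {..<m}"
        using U \<open>k < dim_row A\<close> A by auto
      ultimately have "card (insert k U) \<le> mat_rank A"
        by (rule card_le_mat_rank_if_rows_lin_indep[OF A, rotated])
      then show False
        using card False \<open>finite U\<close> by simp
    qed
  qed
qed

lemma mult_mat_vec_nth_row_combination:
  fixes A :: "real mat"
  assumes A: "A \<in> carrier_mat m r" and z: "z \<in> carrier_vec r" and "U \<subseteq> {..<m}" and "k < m"
    and d: "\<forall>l<r. A $$ (k,l) = (\<Sum>u\<in>U. d u * A $$ (u,l))"
  shows "(A *\<^sub>v z) $ k = (\<Sum>u\<in>U. d u * (A *\<^sub>v z) $ u)"
proof -
  have row: "(A *\<^sub>v z) $ k' = (\<Sum>l<r. A $$ (k',l) * z $ l)" if "k' < m" for k'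
    using A z that by (simp add: scalar_prod_def lessThan_atLeast0)
  have "(A *\<^sub>v z) $ k = (\<Sum>l<r. (\<Sum>u\<in>U. d u * A $$ (u,l)) * z $ l)"
    using d by (simp add: row[OF \<open>k < m\<close>])
  also have "\<dots> = (\<Sum>l<r. \<Sum>u\<in>U. d u * (A $$ (u,l) * z $ l))"
    by (simp add: sum_distrib_right mult.assoc)
  also have "\<dots> = (\<Sum>u\<in>U. d u * (\<Sum>l<r. A $$ (u,l) * z $ l))"
    by (subst sum.swap) (simp add: sum_distrib_left)
  also have "\<dots> = (\<Sum>u\<in>U. d u * (A *\<^sub>v z) $ u)"
    using row \<open>U \<subseteq> {..<m}\<close> by (intro sum.cong refl) auto
  finally show ?thesis .
qed

lemma mult_mat_vec_eq_if_eq_on_rows_span: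
  fixes A :: "real mat"
  assumes A: "A \<in> carrier_mat m r" and span: "rows_span A U" and U: "U \<subseteq> {..<m}"
    and x: "x \<in> carrier_vec r" and z: "z \<in> carrier_vec r"
    and eq: "\<And>u. u \<in> U \<Longrightarrow> (A *\<^sub>v x) $ u = (A *\<^sub>v z) $ u"
  shows "A *\<^sub>v x = A *\<^sub>v z"
proof (rule eq_vecI)
  fix k
  assume "k < dim_vec (A *\<^sub>v z)"
  then have "k < m"
    using A by simp
  then obtain d where d: "\<forall>l<r. A $$ (k,l) = (\<Sum>u\<in>U. d u * A $$ (u,l))"
    using span A unfolding rows_span_def by auto
  have "(A *\<^sub>v x) $ k = (\<Sum>u\<in>U. d u * (A *\<^sub>v x) $ u)"
    by (rule mult_mat_vec_nth_row_combination[OF A x U \<open>k < m\<close> d])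
  also have "\<dots> = (\<Sum>u\<in>U. d u * (A *\<^sub>v z) $ u)"
    using eq by simp
  also have "\<dots> = (A *\<^sub>v z) $ k"
    by (rule mult_mat_vec_nth_row_combination[OF A z U \<open>k < m\<close> d, symmetric])
  finally show "(A *\<^sub>v x) $ k = (A *\<^sub>v z) $ k" .
qed (use A in simp)

section \<open>The ensemble\<close>

lemma mult_mat_lift_vec_nth:
  fixes A :: "real mat"
  assumes A: "A \<in> carrier_mat m r" and S: "S \<subseteq> {..<r}" and "k < m"
  shows "(A *\<^sub>v lift_vec r S y) $ k = (\<Sum>b<card S. A $$ (k, sorted_list_of_set S ! b) * y $ b)"
proof -
  let ?xs = "sorted_list_of_set S"
  have "finite S"
    using S by (rule finite_subset) simp
  have "(A *\<^sub>v lift_vec r S y) $ k = (\<Sum>j\<in>S. lift_vec r S y $ j * A $$ (k,j))"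
    using supp_vec_lift_vec \<open>k < m\<close>
    by (intro mult_mat_vec_nth_supported[OF A _ _ S]) (auto simp: lift_vec_def)
  also have "\<dots> = (\<Sum>b<card S. lift_vec r S y $ (?xs ! b) * A $$ (k, ?xs ! b))"
    using sum.reindex_bij_betw[OF bij_betw_nth_sorted_list_of_set[OF \<open>finite S\<close>],
        of "\<lambda>j. lift_vec r S y $ j * A $$ (k,j)"] by simp
  also have "\<dots> = (\<Sum>b<card S. A $$ (k, ?xs ! b) * y $ b)"
  proof (rule sum.cong[OF refl])
    fix b
    assume "b \<in> {..<card S}"
    then show "lift_vec r S y $ (?xs ! b) * A $$ (k, ?xs ! b) = A $$ (k, ?xs ! b) * y $ b"
      using lift_vec_nth_sorted_list_of_set[OF S, of b y] by simp
  qed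
  finally show ?thesis .
qed

lemma sub_mat_mult_vec_nth:
  fixes A :: "real mat"
  assumes A: "A \<in> carrier_mat m r" and S: "S \<subseteq> {..<r}" and U: "U \<subseteq> {..<m}"
    and y: "y \<in> carrier_vec (card S)" and a: "a < card U"
  shows "(sub_mat A U S *\<^sub>v y) $ a = (A *\<^sub>v lift_vec r S y) $ (sorted_list_of_set U ! a)"
proof -
  have "finite U"
    using U by (rule finite_subset) simp
  then have "sorted_list_of_set U ! a < m"
    using a U nth_mem[of a "sorted_list_of_set U"] by auto
  then show ?thesis
    using a y mult_mat_lift_vec_nth[OF A S]
    by (simp add: sub_mat_def scalar_prod_def lessThan_atLeast0)
qed

text \<open>A kernel vector of the block lifts to a vector supported in \<open>S\<close> that \<open>A\<close> maps to zero on
  the rows \<open>U\<close>, hence on all rows; independence of the columns \<open>S\<close> then forces it to vanish.\<close>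

lemma det_sub_mat_neq_0:
  fixes A :: "real mat"
  assumes A: "A \<in> carrier_mat m r" and span: "rows_span A U" and U: "U \<subseteq> {..<m}"
    and S: "S \<subseteq> {..<r}" and indep: "cols_lin_indep A S" and card: "card S = card U"
  shows "det (sub_mat A U S) \<noteq> 0"
proof
  assume "det (sub_mat A U S) = 0"
  moreover have "sub_mat A U S \<in> carrier_mat (card U) (card U)"
    using card by (simp add: sub_mat_def)
  ultimately obtain y where y: "y \<in> carrier_vec (card U)" "y \<noteq> 0\<^sub>v (card U)"
    and Py: "sub_mat A U S *\<^sub>v y = 0\<^sub>v (card U)"
    using det_0_iff_vec_prod_zero by blast
  have "finite U"
    using U by (rule finite_subset) simp
  let ?x = "lift_vec r S y"
  have x: "?x \<in> carrier_vec r"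
    by (simp add: lift_vec_def)
  have "(A *\<^sub>v ?x) $ u = (A *\<^sub>v 0\<^sub>v r) $ u" if "u \<in> U" for u
  proof -
    let ?a = "card {k\<in>U. k < u}"
    have a: "?a < card U" and u: "sorted_list_of_set U ! ?a = u"
      using nth_sorted_list_of_set_card_less[OF \<open>finite U\<close> that] by auto
    then have "(A *\<^sub>v ?x) $ u = (sub_mat A U S *\<^sub>v y) $ ?a"
      using sub_mat_mult_vec_nth[OF A S U _ a] y card by simp
    also have "\<dots> = (A *\<^sub>v 0\<^sub>v r) $ u"
      using Py a that U A by auto
    finally show ?thesis .
  qed
  then have "A *\<^sub>v ?x = A *\<^sub>v 0\<^sub>v r"
    using mult_mat_vec_eq_if_eq_on_rows_span[OF A span U x] by simp
  moreover have "supp_vec (0\<^sub>v r) \<subseteq> S"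
    by (auto simp: supp_vec_def)
  ultimately have "?x = 0\<^sub>v r"
    by (intro eq_if_supported_in_cols_lin_indep[OF A indep S x supp_vec_lift_vec]) simp_all
  then have "y = 0\<^sub>v (card U)"
    using lift_vec_eq_0D[OF S] y(1) card by simp
  with y(2) show False ..
qed

lemma ensemble_mat_mult_vec:
  assumes S: "S \<subseteq> {..<dim_col A}" and card: "card S = card U"
    and Q: "mat_inverse (sub_mat A U S) = Some Q" "Q \<in> carrier_mat (card U) (card U)"
    and y: "y \<in> carrier_vec (card U)"
  shows "ensemble_mat A U S *\<^sub>v y = lift_vec (dim_col A) S (Q *\<^sub>v y)"
proof (rule eq_vecI)
  fix j
  assume "j < dim_vec (lift_vec (dim_col A) S (Q *\<^sub>v y))"
  then have j: "j < dim_col A"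
    by (simp add: lift_vec_def)
  show "(ensemble_mat A U S *\<^sub>v y) $ j = lift_vec (dim_col A) S (Q *\<^sub>v y) $ j"
  proof (cases "j \<in> S")
    case True
    have "finite S"
      using S by (rule finite_subset) simp
    then have "card {k\<in>S. k < j} < card U"
      using nth_sorted_list_of_set_card_less(1)[OF _ True] card by simp
    then show ?thesis
      using True j Q y by (simp add: ensemble_mat_def lift_vec_def scalar_prod_def)
  next
    case False
    then show ?thesis
      using j y by (simp add: ensemble_mat_def lift_vec_def scalar_prod_def)
  qed
qed (simp add: ensemble_mat_def lift_vec_def)

lemma ensemble_mat_mult_col_restr:
  fixes A W :: "real mat"
  assumes A: "A \<in> carrier_mat m r" and W: "W \<in> carrier_mat r n" and i: "i < n"
    and U: "U \<subseteq> {..<m}" and span: "rows_span A U" and card: "card U = mat_rank A"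
    and S: "S \<in> ensemble_sets A"
  shows "ensemble_mat A U S *\<^sub>v col_restr (A * W) U i \<in> carrier_vec r"
    and "supp_vec (ensemble_mat A U S *\<^sub>v col_restr (A * W) U i) \<subseteq> S"
    and "A *\<^sub>v (ensemble_mat A U S *\<^sub>v col_restr (A * W) U i) = A *\<^sub>v col W i"
proof -
  let ?P = "sub_mat A U S" and ?y = "col_restr (A * W) U i"
  have S_sub: "S \<subseteq> {..<r}" and indep: "cols_lin_indep A S" and card_S: "card S = card U"
    using S A card by (auto simp: ensemble_sets_def)
  have P: "?P \<in> carrier_mat (card U) (card U)"
    using card_S by (simp add: sub_mat_def)
  have "det ?P \<noteq> 0"
    using det_sub_mat_neq_0[OF A span U S_sub indep card_S] .
  then obtain Q where Q: "mat_inverse ?P = Some Q"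
    using det_non_zero_imp_unit[OF P] mat_inverse(1)[OF P] by fastforce
  have PQ: "?P * Q = 1\<^sub>m (card U)" and Q_carrier: "Q \<in> carrier_mat (card U) (card U)"
    using mat_inverse(2)[OF P Q] by auto
  have y: "?y \<in> carrier_vec (card U)"
    by (simp add: col_restr_def)
  have x: "ensemble_mat A U S *\<^sub>v ?y = lift_vec r S (Q *\<^sub>v ?y)"
    using ensemble_mat_mult_vec[OF _ card_S Q Q_carrier y] S_sub A by simp
  show "ensemble_mat A U S *\<^sub>v ?y \<in> carrier_vec r"
    unfolding x by (simp add: lift_vec_def)
  show "supp_vec (ensemble_mat A U S *\<^sub>v ?y) \<subseteq> S"
    unfolding x by (rule supp_vec_lift_vec)
  have "finite U"
    using U by (rule finite_subset) simp
  show "A *\<^sub>v (ensemble_mat A U S *\<^sub>v ?y) = A *\<^sub>v col W i"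
    unfolding x
  proof (rule mult_mat_vec_eq_if_eq_on_rows_span[OF A span U])
    fix u
    assume "u \<in> U"
    let ?a = "card {k\<in>U. k < u}"
    have a: "?a < card U" and u: "sorted_list_of_set U ! ?a = u"
      using nth_sorted_list_of_set_card_less[OF \<open>finite U\<close> \<open>u \<in> U\<close>] by auto
    have "(A *\<^sub>v lift_vec r S (Q *\<^sub>v ?y)) $ u = (?P *\<^sub>v (Q *\<^sub>v ?y)) $ ?a"
      using sub_mat_mult_vec_nth[OF A S_sub U _ a] card_S Q_carrier y u by simp
    also have "?P *\<^sub>v (Q *\<^sub>v ?y) = ?y"
      using assoc_mult_mat_vec[OF P Q_carrier y] PQ y by simp
    also have "?y $ ?a = (A *\<^sub>v col W i) $ u"
      using a u \<open>u \<in> U\<close> U A W i by (auto simp: col_restr_def)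
    finally show "(A *\<^sub>v lift_vec r S (Q *\<^sub>v ?y)) $ u = (A *\<^sub>v col W i) $ u" .
  qed (use W in \<open>auto simp: lift_vec_def\<close>)
qed

section \<open>Stable factorizations\<close>

lemma supp_col_eq_lex_first_if_stable:
  fixes M A W :: "real mat"
  assumes A: "A \<in> carrier_mat m r" and W: "W \<in> carrier_mat r n" and "nonneg_mat W"
    and stable: "stable_factorization M A W" and i: "i < n"
  shows "supp_vec (col W i) = lex_first r (\<lambda>S. col_admissible A S (A *\<^sub>v col W i))"
    (is "_ = ?L")
proof -
  have M: "M = A * W"
    using stable by (simp add: stable_factorization_def)
  have w: "col W i \<in> carrier_vec r" and nonneg: "nonneg_vec (col W i)"
    using W i \<open>nonneg_mat W\<close> by (auto simp: nonneg_vec_def nonneg_mat_def)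
  have supp_r: "supp_vec (col W i) \<subseteq> {..<r}"
    using supp_vec_subset[of "col W i"] W by simp
  have adm: "col_admissible A (supp_vec (col W i)) (A *\<^sub>v col W i)"
    by (rule col_admissible_supp_vec[OF A w nonneg])
  have "supp_vec (col W i) \<subseteq> ?L"
  proof
    fix l
    assume "l \<in> supp_vec (col W i)"
    then have "l < r" and "W $$ (l,i) \<noteq> 0"
      using W i by (auto simp: supp_vec_def)
    then have "l \<in> lex_first (dim_col A) (\<lambda>S. col_admissible A S (col M i))"
      using stable W i M A unfolding stable_factorization_def by auto
    moreover have "dim_col A = r"
      using A by simp
    moreover have "col M i = A *\<^sub>v col W i"
      unfolding M by (rule col_mult2[OF A W i])
    ultimately show "l \<in> ?L"
      by (simp only:)
  qed
  moreover have "card ?L \<le> card (supp_vec (col W i))"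
    using supp_r adm by (rule card_lex_first_le)
  moreover have "finite ?L"
    using lex_first(1)[of _ r "\<lambda>S. col_admissible A S (A *\<^sub>v col W i)", OF supp_r adm]
    by (rule finite_subset) simp
  ultimately show ?thesis
    using card_seteq by blast
qed

lemma set_lex_less_supp_of_nonneg_solution:
  fixes A :: "real mat"
  assumes A: "A \<in> carrier_mat m r" and w: "w \<in> carrier_vec r" "nonneg_vec w"
    and L: "supp_vec w = lex_first r (\<lambda>S. col_admissible A S (A *\<^sub>v w))"
    and x: "x \<in> carrier_vec r" "nonneg_vec x" and eq: "A *\<^sub>v x = A *\<^sub>v w" and "x \<noteq> w"
  shows "set_lex_less (supp_vec w) (supp_vec x)"
proof -
  have w_r: "supp_vec w \<subseteq> {..<r}" and x_r: "supp_vec x \<subseteq> {..<r}"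
    using supp_vec_subset[of w] supp_vec_subset[of x] w x by auto
  have adm_w: "col_admissible A (supp_vec w) (A *\<^sub>v w)"
    using col_admissible_supp_vec[OF A w] .
  have adm_x: "col_admissible A (supp_vec x) (A *\<^sub>v w)"
    using col_admissible_supp_vec[OF A x] eq by simp
  have indep: "cols_lin_indep A (supp_vec w)"
    unfolding L by (rule cols_lin_indep_lex_first[OF w_r adm_w])
  have "supp_vec x \<noteq> supp_vec w"
  proof
    assume "supp_vec x = supp_vec w"
    then have "x = w"
      using eq_if_supported_in_cols_lin_indep[OF A indep w_r x(1) _ w(1) subset_refl eq] by simp
    with \<open>x \<noteq> w\<close> show False ..
  qed
  then show ?thesis
    using lex_first(3)[of _ r "\<lambda>S. col_admissible A S (A *\<^sub>v w)", OF w_r adm_w x_r adm_x] L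
    by simp
qed

lemma col_in_ensemble_if_supp_lex_first:
  fixes A W :: "real mat"
  assumes A: "A \<in> carrier_mat m r" and W: "W \<in> carrier_mat r n" and i: "i < n"
    and U: "U \<subseteq> {..<m}" and span: "rows_span A U" and card: "card U = mat_rank A"
    and nonneg: "nonneg_vec (col W i)"
    and L: "supp_vec (col W i) = lex_first r (\<lambda>S. col_admissible A S (A *\<^sub>v col W i))"
  shows "\<exists>S\<in>ensemble_sets A. col W i = ensemble_mat A U S *\<^sub>v col_restr (A * W) U i"
proof -
  let ?w = "col W i"
  have w: "?w \<in> carrier_vec r"
    using W by (simp add: carrier_vecI)
  have w_r: "supp_vec ?w \<subseteq> {..<r}"
    using supp_vec_subset[of ?w] W by simp
  have "cols_lin_indep A (supp_vec ?w)"
    unfolding L using w_r col_admissible_supp_vec[OF A w nonneg] by (rule cols_lin_indep_lex_first)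
  then obtain S where S: "S \<in> ensemble_sets A" "supp_vec ?w \<subseteq> S"
    using cols_lin_indep_extend_ensemble_set[OF A w_r] by blast
  then have "cols_lin_indep A S" and "S \<subseteq> {..<r}"
    using A by (auto simp: ensemble_sets_def)
  moreover note x = ensemble_mat_mult_col_restr[OF A W i U span card S(1)]
  ultimately have "?w = ensemble_mat A U S *\<^sub>v col_restr (A * W) U i"
    using eq_if_supported_in_cols_lin_indep[OF A _ _ w S(2) x(1,2) x(3)[symmetric]] by blast
  then show ?thesis
    using S(1) by blast
qed

theorem mainTheorem4:
  fixes M A W :: "real mat" and m n r s :: nat and U :: "nat set"
  assumes "M \<in> carrier_mat m n" and "A \<in> carrier_mat m r" and "W \<in> carrier_mat r n"
    and "nonneg_mat M" and "nonneg_mat A" and "nonneg_mat W"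
    and "stable_factorization M A W"
    and "s = mat_rank A"
    and "U \<subseteq> {..<m}" and "card U = s" and "rows_lin_indep A U"
    and "i < n"
  shows "col W i \<in> {ensemble_mat A U S *\<^sub>v col_restr M U i | S. S \<in> ensemble_sets A}
       \<and> nonneg_vec (col W i)
       \<and> (\<forall>x \<in> {ensemble_mat A U S *\<^sub>v col_restr M U i | S. S \<in> ensemble_sets A}.
            nonneg_vec x \<and> x \<noteq> col W i \<longrightarrow> set_lex_less (supp_vec (col W i)) (supp_vec x))"
proof -
  note A = assms(2) and W = assms(3) and U = assms(9) and i = assms(12)
  let ?w = "col W i"
  let ?X = "{ensemble_mat A U S *\<^sub>v col_restr M U i | S. S \<in> ensemble_sets A}"
  have M: "M = A * W"
    using assms(7) by (simp add: stable_factorization_def)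
  have w: "?w \<in> carrier_vec r" "nonneg_vec ?w"
    using W i assms(6) by (auto simp: nonneg_mat_def nonneg_vec_def)
  have L: "supp_vec ?w = lex_first r (\<lambda>S. col_admissible A S (A *\<^sub>v ?w))"
    using supp_col_eq_lex_first_if_stable[OF A W assms(6,7) i] .
  have card: "card U = mat_rank A"
    using assms(8,10) by simp
  have span: "rows_span A U"
    using rows_span_if_card_eq_mat_rank[OF A U card assms(11)] .
  have "?w \<in> ?X"
    using col_in_ensemble_if_supp_lex_first[OF A W i U span card w(2) L] M by auto
  moreover have "set_lex_less (supp_vec ?w) (supp_vec x)"
    if x: "x \<in> ?X" "nonneg_vec x" "x \<noteq> ?w" for x
  proof -
    obtain S where "S \<in> ensemble_sets A" and "x = ensemble_mat A U S *\<^sub>v col_restr (A * W) U i"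
      using x(1) M by blast
    then have "x \<in> carrier_vec r" and "A *\<^sub>v x = A *\<^sub>v ?w"
      using ensemble_mat_mult_col_restr[OF A W i U span card] by auto
    then show ?thesis
      using set_lex_less_supp_of_nonneg_solution[OF A w L _ x(2) _ x(3)] by blast
  qed
  ultimately show ?thesis
    using w(2) by blast
qed

end
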